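(* Let $b>0$, $k>0$, $c>1$ and $E\in(0,1)$. Define $$m_{SN}=\frac{-E^2k^2+2Eck-2Ek+c-1}{E^2(E^2k^2+2Ek+1)},$$ $$a_1=\frac{E^4k^2-2E^3k^2+2E^3k+3E^2ck+E^2k^2-4E^2k-2Eck+E^2+2Ec+2Ek-2E-c+1}{cE^2(E^2k^2+2Ek+1)},$$ and assume $a_1>0$, $m_{SN}>0$. Consider, with $a=a_1$ and bifurcation parameter $m>0$, the system $$\frac{dx}{dt}=bx(1-x-cy),\qquad \frac{dy}{dt}=y\Big(\frac{1}{1+kx}-y-ax-mxy\Big),$$ for which, at $m=m_{SN}$, $E_{3*}=(E,(1-E)/c)$ is a positive equilibrium. Suppose that at $m=m_{SN}$ one has $m>m_1:=1-ac-k$ and $0<k<\frac1a-1$, and that $c\ne\frac{E^3k^3+3E^2k^2+3Ek+1}{3E^2k^2+3Ek+1}$. Then the system undergoes a saddle-node bifurcation around $E_{3*}$ at the bifurcation parameter threshold $m=m_{SN}$.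
   Context: The values $m_{SN}$ and $a_1$ are exactly those for which $E$ is a double root of the cubic $u(x)=kmx^3+((-ac-m+1)k+m)x^2+(-ac-k-m+1)x+c-1$, i.e. $u(E)=u'(E)=0$; roots of $u$ in $(0,1)$ are the $x$-coordinates of positive equilibria $(x,(1-x)/c)$. *)

theory Defs
  imports "HOL-Analysis.Analysis"
begin

definition m_SN :: "real \<Rightarrow> real \<Rightarrow> real \<Rightarrow> real" where
  "m_SN k c Ee =
     (- (Ee^2 * k^2) + 2 * Ee * c * k - 2 * Ee * k + c - 1) /
     (Ee^2 * (Ee^2 * k^2 + 2 * Ee * k + 1))"

definition a_1 :: "real \<Rightarrow> real \<Rightarrow> real \<Rightarrow> real" where
  "a_1 k c Ee =
     (Ee^4 * k^2 - 2 * Ee^3 * k^2 + 2 * Ee^3 * k + 3 * Ee^2 * c * k + Ee^2 * k^2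
      - 4 * Ee^2 * k - 2 * Ee * c * k + Ee^2 + 2 * Ee * c + 2 * Ee * k - 2 * Ee - c + 1) /
     (c * Ee^2 * (Ee^2 * k^2 + 2 * Ee * k + 1))"

definition vfield :: "real \<Rightarrow> real \<Rightarrow> real \<Rightarrow> real \<Rightarrow> real \<Rightarrow> real \<times> real \<Rightarrow> real \<times> real" where
  "vfield b c k a m p =
     (let x = fst p; y = snd p in
       (b * x * (1 - x - c * y), y * (1 / (1 + k * x) - y - a * x - m * x * y)))"

text \<open>Saddle-node (fold) bifurcation of the family of planar vector fields F m at the
  equilibrium p0 and parameter value m0:
  (i) p0 is an equilibrium of F m0 whose linearization D has 0 as a simple eigenvalue
      (D singular, but D is not nilpotent, i.e. D o D is not the zero map);
  (ii) locally, p0 is the only equilibrium of F m0, and for every sufficiently small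
      neighbourhood ball p0 delta, on one side of m0 (direction sigma) there are exactly two
      equilibria in that neighbourhood and on the other side there are none
      (two equilibria collide at p0 and disappear).\<close>

definition saddle_node_bifurcation ::
  "(real \<Rightarrow> real \<times> real \<Rightarrow> real \<times> real) \<Rightarrow> real \<Rightarrow> real \<times> real \<Rightarrow> bool" where
  "saddle_node_bifurcation F m0 p0 \<longleftrightarrow>
     F m0 p0 = 0 \<and>
     (\<exists>D. (F m0 has_derivative D) (at p0) \<and> (\<exists>v. v \<noteq> 0 \<and> D v = 0) \<and> (\<exists>w. D (D w) \<noteq> 0)) \<and>
     (\<exists>\<delta>0>0. (\<forall>p\<in>ball p0 \<delta>0. F m0 p = 0 \<longrightarrow> p = p0) \<and>
        (\<exists>\<sigma>\<in>{-1, 1::real}. \<forall>\<delta>. 0 < \<delta> \<and> \<delta> \<le> \<delta>0 \<longrightarrow>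
           (\<exists>\<epsilon>>0. \<forall>m.
              (0 < \<sigma> * (m - m0) \<and> \<sigma> * (m - m0) < \<epsilon> \<longrightarrow>
                 (\<exists>p q. p \<noteq> q \<and> {z \<in> ball p0 \<delta>. F m z = 0} = {p, q})) \<and>
              (0 < \<sigma> * (m0 - m) \<and> \<sigma> * (m0 - m) < \<epsilon> \<longrightarrow>
                 {z \<in> ball p0 \<delta>. F m z = 0} = {}))))"

end

theory Submission
  imports Defs
begin

text \<open>Near \<open>(E, (1 - E)/c)\<close> every equilibrium lies on the nullcline \<open>y = (1 - x)/c\<close>, and
  \<open>x\<close> is an equilibrium abscissa iff it is a root of the cubic \<open>u\<close>. For \<open>a = a_1\<close> one has
  \<open>u(x) = (x - E)\<^sup>2 L(x) - (m - m_SN) x (1 - x) (1 + k x)\<close> with \<open>L\<close> linear, and the excluded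
  value of \<open>c\<close> is exactly the one with \<open>L(E) = 0\<close>. Hence the equilibria near \<open>E\<close> solve
  \<open>m - m_SN = (x - E)\<^sup>2 L(x) / (x (1 - x) (1 + k x))\<close>, whose right-hand side has a strict
  extremum at \<open>E\<close> with monotone branches on both sides: two solutions for \<open>m\<close> slightly on
  one side of \<open>m_SN\<close>, none on the other. At the fold the Jacobian has rank one with kernel
  \<open>(c, -1)\<close> and non-zero trace (as \<open>m_SN > 0\<close>), so \<open>0\<close> is a simple eigenvalue.\<close>

definition strict_valley :: "(real \<Rightarrow> real) \<Rightarrow> real \<Rightarrow> real \<Rightarrow> bool" where
  "strict_valley \<phi> x0 \<eta> \<longleftrightarrow>
     continuous_on {x0 - \<eta>..x0 + \<eta>} \<phi> \<and>
     strict_antimono_on {x0 - \<eta>..x0} \<phi> \<and> strict_mono_on {x0..x0 + \<eta>} \<phi>"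

lemma strict_valley_less:
  assumes "strict_valley \<phi> x0 \<eta>" "\<bar>x - x0\<bar> \<le> \<eta>" "x \<noteq> x0"
  shows "\<phi> x0 < \<phi> x"
proof (cases "x < x0")
  case True
  then show ?thesis using assms unfolding strict_valley_def monotone_on_def by auto
next
  case False
  then show ?thesis using assms unfolding strict_valley_def monotone_on_def by auto
qed

lemma strict_valley_level_set_empty:
  assumes "strict_valley \<phi> x0 \<eta>" "\<rho> \<le> \<eta>" "\<nu> < \<phi> x0"
  shows "{x. \<bar>x - x0\<bar> < \<rho> \<and> \<phi> x = \<nu>} = {}"
  using strict_valley_less[OF assms(1)] assms(2,3) by force

lemma strict_valley_level_set_pair:
  assumes valley: "strict_valley \<phi> x0 \<eta>" and "0 < \<rho>" "\<rho> \<le> \<eta>"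
    and "\<phi> x0 < \<nu>" "\<nu> < min (\<phi> (x0 - \<rho>)) (\<phi> (x0 + \<rho>))"
  shows "\<exists>p q. p \<noteq> q \<and> {x. \<bar>x - x0\<bar> < \<rho> \<and> \<phi> x = \<nu>} = {p, q}"
proof -
  have cont: "continuous_on {x0 - \<eta>..x0 + \<eta>} \<phi>"
    and dec: "\<And>x y. x0 - \<eta> \<le> x \<Longrightarrow> x < y \<Longrightarrow> y \<le> x0 \<Longrightarrow> \<phi> y < \<phi> x"
    and inc: "\<And>x y. x0 \<le> x \<Longrightarrow> x < y \<Longrightarrow> y \<le> x0 + \<eta> \<Longrightarrow> \<phi> x < \<phi> y"
    using valley by (auto simp: strict_valley_def monotone_on_def)
  have "continuous_on {x0 - \<rho>..x0} \<phi>" "continuous_on {x0..x0 + \<rho>} \<phi>"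
    using \<open>\<rho> \<le> \<eta>\<close> by (auto intro: continuous_on_subset[OF cont])
  then obtain p q where p: "x0 - \<rho> \<le> p" "p \<le> x0" "\<phi> p = \<nu>"
    and q: "x0 \<le> q" "q \<le> x0 + \<rho>" "\<phi> q = \<nu>"
    using IVT2'[of \<phi> x0 \<nu> "x0 - \<rho>"] IVT'[of \<phi> x0 \<nu> "x0 + \<rho>"] assms(2,4,5) by auto
  have p': "x0 - \<rho> < p" "p < x0" and q': "x0 < q" "q < x0 + \<rho>"
    using p q assms(4,5) by (auto simp: order.order_iff_strict)
  have "x = p \<or> x = q" if x: "\<bar>x - x0\<bar> < \<rho>" "\<phi> x = \<nu>" for x
  proof (cases "x < x0")
    case True
    then show ?thesis
      using dec[of x p] dec[of p x] x p p' \<open>\<rho> \<le> \<eta>\<close> by (cases x p rule: linorder_cases) auto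
  next
    case False
    then have "x0 < x" using x \<open>\<phi> x0 < \<nu>\<close> by (cases "x = x0") auto
    then show ?thesis
      using inc[of x q] inc[of q x] x q q' \<open>\<rho> \<le> \<eta>\<close> by (cases x q rule: linorder_cases) auto
  qed
  then have "{x. \<bar>x - x0\<bar> < \<rho> \<and> \<phi> x = \<nu>} = {p, q}"
    using p p' q q' by auto
  moreover have "p \<noteq> q" using p' q' by simp
  ultimately show ?thesis by blast
qed

lemma strict_valley_square_factor:
  fixes R R' :: "real \<Rightarrow> real"
  assumes "0 < d" and "0 < R x0"
    and deriv: "\<And>x. \<bar>x - x0\<bar> < d \<Longrightarrow> (R has_real_derivative R' x) (at x)"
    and "isCont R' x0"
  shows "\<exists>\<eta>>0. strict_valley (\<lambda>x. (x - x0)^2 * R x) x0 \<eta>"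
proof -
  define G where "G x = 2 * R x + (x - x0) * R' x" for x
  have dphi: "((\<lambda>x. (x - x0)^2 * R x) has_real_derivative (x - x0) * G x) (at x)"
    if "\<bar>x - x0\<bar> < d" for x
    using deriv[OF that]
    by (auto intro!: derivative_eq_intros simp: G_def algebra_simps power2_eq_square)
  have cont_G: "isCont G x0"
    using DERIV_isCont[OF deriv] \<open>0 < d\<close> \<open>isCont R' x0\<close>
    unfolding G_def by (auto intro!: continuous_intros)
  have "0 < G x0" using \<open>0 < R x0\<close> by (simp add: G_def)
  then obtain r where "0 < r" and r: "\<forall>x. x \<noteq> x0 \<and> \<bar>x0 - x\<bar> < r \<longrightarrow> 0 < G x"
    using LIM_fun_gt_zero[OF cont_G[unfolded isCont_def]] by blast
  have G_pos: "0 < G x" if "\<bar>x - x0\<bar> < r" for x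
    using r \<open>0 < G x0\<close> that by (cases "x = x0") (auto simp: abs_minus_commute)
  define \<eta> where "\<eta> = min r d / 2"
  have near: "\<bar>x - x0\<bar> < d" "0 < G x" if "\<bar>x - x0\<bar> \<le> \<eta>" for x
    using that G_pos[of x] \<open>0 < r\<close> \<open>0 < d\<close> by (auto simp: \<eta>_def)
  have cont: "continuous_on {x0 - \<eta>..x0 + \<eta>} (\<lambda>x. (x - x0)^2 * R x)"
    using dphi near by (intro DERIV_atLeastAtMost_imp_continuous_on) force
  have "strict_antimono_on {x0 - \<eta>..x0} (\<lambda>x. (x - x0)^2 * R x)"
  proof (rule monotone_onI)
    fix x y assume xy: "x \<in> {x0 - \<eta>..x0}" "y \<in> {x0 - \<eta>..x0}" "x < y"
    show "(y - x0)^2 * R y < (x - x0)^2 * R x"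
    proof (rule DERIV_neg_imp_decreasing_open[OF \<open>x < y\<close>])
      show "continuous_on {x..y} (\<lambda>x. (x - x0)^2 * R x)"
        using xy by (auto intro: continuous_on_subset[OF cont])
      fix z assume "x < z" "z < y"
      then show "\<exists>l. ((\<lambda>x. (x - x0)^2 * R x) has_real_derivative l) (at z) \<and> l < 0"
        using xy near[of z] dphi[of z] by (auto intro!: mult_neg_pos)
    qed
  qed
  moreover have "strict_mono_on {x0..x0 + \<eta>} (\<lambda>x. (x - x0)^2 * R x)"
  proof (rule monotone_onI)
    fix x y assume xy: "x \<in> {x0..x0 + \<eta>}" "y \<in> {x0..x0 + \<eta>}" "x < y"
    show "(x - x0)^2 * R x < (y - x0)^2 * R y"
    proof (rule DERIV_pos_imp_increasing_open[OF \<open>x < y\<close>])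
      show "continuous_on {x..y} (\<lambda>x. (x - x0)^2 * R x)"
        using xy by (auto intro: continuous_on_subset[OF cont])
      fix z assume "x < z" "z < y"
      then show "\<exists>l. ((\<lambda>x. (x - x0)^2 * R x) has_real_derivative l) (at z) \<and> l > 0"
        using xy near[of z] dphi[of z] by auto
    qed
  qed
  moreover have "0 < \<eta>" using \<open>0 < r\<close> \<open>0 < d\<close> by (simp add: \<eta>_def)
  ultimately show ?thesis using cont unfolding strict_valley_def by blast
qed

lemma dist_point_on_line:
  "dist (x0, y0) (x, y0 + s * (x - x0)) = \<bar>x - x0\<bar> * sqrt (1 + s^2)"
proof -
  have "dist (x0, y0) (x, y0 + s * (x - x0)) = sqrt ((x - x0)^2 * (1 + s^2))"
    by (simp add: dist_Pair_Pair dist_real_def power2_eq_square algebra_simps)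
  then show ?thesis by (simp add: real_sqrt_mult)
qed

lemma divide_sqrt_one_plus_square_le:
  assumes "0 \<le> \<delta>"
  shows "\<delta> / sqrt (1 + s^2) \<le> \<delta>"
proof -
  have "0 < 1 + s^2" by (intro add_pos_nonneg) simp_all
  then show ?thesis using divide_left_mono[of 1 "sqrt (1 + s^2)" \<delta>] assms by simp
qed

lemma zeros_in_ball_on_line:
  fixes G :: "real \<times> real \<Rightarrow> real \<times> real"
  assumes zero_iff: "\<And>x y. (x, y) \<in> ball (x0, y0) r \<Longrightarrow> G (x, y) = 0 \<longleftrightarrow> y = y0 + s * (x - x0) \<and> P x"
    and "\<delta> \<le> r"
  shows "{z \<in> ball (x0, y0) \<delta>. G z = 0} =
    (\<lambda>x. (x, y0 + s * (x - x0))) ` {x. \<bar>x - x0\<bar> < \<delta> / sqrt (1 + s^2) \<and> P x}"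
proof -
  have "0 < sqrt (1 + s^2)" by (metis add_pos_nonneg real_sqrt_gt_zero zero_less_one zero_le_power2)
  then have in_ball: "(x, y0 + s * (x - x0)) \<in> ball (x0, y0) \<delta> \<longleftrightarrow> \<bar>x - x0\<bar> < \<delta> / sqrt (1 + s^2)" for x
    using dist_point_on_line[of x0 y0 x s] by (simp add: pos_less_divide_eq)
  show ?thesis
  proof (intro set_eqI iffI)
    fix z assume z: "z \<in> {z \<in> ball (x0, y0) \<delta>. G z = 0}"
    obtain x y where [simp]: "z = (x, y)" by fastforce
    have "y = y0 + s * (x - x0)" "P x"
      using z zero_iff[of x y] \<open>\<delta> \<le> r\<close> by auto
    then show "z \<in> (\<lambda>x. (x, y0 + s * (x - x0))) ` {x. \<bar>x - x0\<bar> < \<delta> / sqrt (1 + s^2) \<and> P x}"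
      using z in_ball[of x] by auto
  next
    fix z assume "z \<in> (\<lambda>x. (x, y0 + s * (x - x0))) ` {x. \<bar>x - x0\<bar> < \<delta> / sqrt (1 + s^2) \<and> P x}"
    then obtain x where "z = (x, y0 + s * (x - x0))" "\<bar>x - x0\<bar> < \<delta> / sqrt (1 + s^2)" "P x"
      by blast
    then show "z \<in> {z \<in> ball (x0, y0) \<delta>. G z = 0}"
      using in_ball[of x] zero_iff[of x "y0 + s * (x - x0)"] \<open>\<delta> \<le> r\<close> by auto
  qed
qed

lemma fold_zero_count_along_line:
  fixes F :: "real \<Rightarrow> real \<times> real \<Rightarrow> real \<times> real"
  assumes zero_iff: "\<And>m x y. (x, y) \<in> ball (x0, y0) r \<Longrightarrow>
      F m (x, y) = 0 \<longleftrightarrow> y = y0 + s * (x - x0) \<and> \<phi> x = \<sigma> * (m - m0)"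
    and valley: "strict_valley \<phi> x0 \<eta>" "\<phi> x0 = 0"
    and "0 < \<delta>" "\<delta> \<le> r" "\<delta> \<le> \<eta>"
  shows "\<exists>\<epsilon>>0. \<forall>m.
    (0 < \<sigma> * (m - m0) \<and> \<sigma> * (m - m0) < \<epsilon> \<longrightarrow>
      (\<exists>p q. p \<noteq> q \<and> {z \<in> ball (x0, y0) \<delta>. F m z = 0} = {p, q})) \<and>
    (0 < \<sigma> * (m0 - m) \<and> \<sigma> * (m0 - m) < \<epsilon> \<longrightarrow> {z \<in> ball (x0, y0) \<delta>. F m z = 0} = {})"
proof -
  define \<rho> where "\<rho> = \<delta> / sqrt (1 + s^2)"
  define line where "line x = (x, y0 + s * (x - x0))" for x
  have "0 < 1 + s^2" by (intro add_pos_nonneg) simp_all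
  then have "0 < \<rho>" using \<open>0 < \<delta>\<close> by (simp add: \<rho>_def)
  have "\<rho> \<le> \<eta>"
    using divide_sqrt_one_plus_square_le[of \<delta> s] \<open>0 < \<delta>\<close> \<open>\<delta> \<le> \<eta>\<close> by (simp add: \<rho>_def)
  have zeros: "{z \<in> ball (x0, y0) \<delta>. F m z = 0} = line ` {x. \<bar>x - x0\<bar> < \<rho> \<and> \<phi> x = \<sigma> * (m - m0)}" for m
    unfolding line_def \<rho>_def
    using zeros_in_ball_on_line[where G = "F m" and P = "\<lambda>x. \<phi> x = \<sigma> * (m - m0)"] zero_iff \<open>\<delta> \<le> r\<close>
    by blast
  define \<epsilon> where "\<epsilon> = min (\<phi> (x0 - \<rho>)) (\<phi> (x0 + \<rho>))"
  have "0 < \<epsilon>"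
    using strict_valley_less[OF valley(1), of "x0 - \<rho>"] strict_valley_less[OF valley(1), of "x0 + \<rho>"]
      \<open>0 < \<rho>\<close> \<open>\<rho> \<le> \<eta>\<close> \<open>\<phi> x0 = 0\<close> by (simp add: \<epsilon>_def)
  have pair: "\<exists>p q. p \<noteq> q \<and> {z \<in> ball (x0, y0) \<delta>. F m z = 0} = {p, q}"
    if "0 < \<sigma> * (m - m0)" "\<sigma> * (m - m0) < \<epsilon>" for m
  proof -
    have "\<phi> x0 < \<sigma> * (m - m0)" "\<sigma> * (m - m0) < min (\<phi> (x0 - \<rho>)) (\<phi> (x0 + \<rho>))"
      using that \<open>\<phi> x0 = 0\<close> by (simp_all add: \<epsilon>_def)
    from strict_valley_level_set_pair[OF valley(1) \<open>0 < \<rho>\<close> \<open>\<rho> \<le> \<eta>\<close> this]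
    obtain p q where "p \<noteq> q" "{x. \<bar>x - x0\<bar> < \<rho> \<and> \<phi> x = \<sigma> * (m - m0)} = {p, q}"
      by blast
    then have "line p \<noteq> line q" "{z \<in> ball (x0, y0) \<delta>. F m z = 0} = {line p, line q}"
      using zeros[of m] by (auto simp: line_def)
    then show ?thesis by blast
  qed
  have empty: "{z \<in> ball (x0, y0) \<delta>. F m z = 0} = {}" if "\<sigma> * (m - m0) < 0" for m
    using zeros[of m] strict_valley_level_set_empty[OF valley(1) \<open>\<rho> \<le> \<eta>\<close>] that \<open>\<phi> x0 = 0\<close>
    by simp
  show ?thesis
  proof (intro exI[of _ \<epsilon>] conjI allI impI \<open>0 < \<epsilon>\<close>)
    fix m assume "0 < \<sigma> * (m - m0) \<and> \<sigma> * (m - m0) < \<epsilon>"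
    then show "\<exists>p q. p \<noteq> q \<and> {z \<in> ball (x0, y0) \<delta>. F m z = 0} = {p, q}" using pair by blast
  next
    fix m assume "0 < \<sigma> * (m0 - m) \<and> \<sigma> * (m0 - m) < \<epsilon>"
    then have "\<sigma> * (m - m0) < 0" by (simp add: algebra_simps)
    then show "{z \<in> ball (x0, y0) \<delta>. F m z = 0} = {}" by (rule empty)
  qed
qed

lemma saddle_node_bifurcation_along_line:
  fixes F :: "real \<Rightarrow> real \<times> real \<Rightarrow> real \<times> real"
  assumes "0 < r"
    and zero_iff: "\<And>m x y. (x, y) \<in> ball (x0, y0) r \<Longrightarrow>
      F m (x, y) = 0 \<longleftrightarrow> y = y0 + s * (x - x0) \<and> \<phi> x = \<sigma> * (m - m0)"
    and "\<sigma> \<in> {-1, 1}"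
    and valley: "strict_valley \<phi> x0 \<eta>" "0 < \<eta>" "\<phi> x0 = 0"
    and "(F m0 has_derivative D) (at (x0, y0))" "v \<noteq> 0" "D v = 0" "D (D w) \<noteq> 0"
  shows "saddle_node_bifurcation F m0 (x0, y0)"
proof -
  define \<delta>0 where "\<delta>0 = min r \<eta>"
  have "0 < \<delta>0" using \<open>0 < r\<close> \<open>0 < \<eta>\<close> by (simp add: \<delta>0_def)
  have "F m0 (x0, y0) = 0"
    using zero_iff[of x0 y0] \<open>0 < r\<close> \<open>\<phi> x0 = 0\<close> by simp
  moreover have "\<forall>p\<in>ball (x0, y0) \<delta>0. F m0 p = 0 \<longrightarrow> p = (x0, y0)"
  proof (intro ballI impI)
    fix p assume "p \<in> ball (x0, y0) \<delta>0" "F m0 p = 0"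
    moreover have "{z \<in> ball (x0, y0) \<delta>0. F m0 z = 0} =
        (\<lambda>x. (x, y0 + s * (x - x0))) ` {x. \<bar>x - x0\<bar> < \<delta>0 / sqrt (1 + s^2) \<and> \<phi> x = 0}"
      by (rule zeros_in_ball_on_line[where r = r]) (simp_all add: zero_iff \<delta>0_def)
    ultimately obtain x where "p = (x, y0 + s * (x - x0))" "\<bar>x - x0\<bar> < \<delta>0 / sqrt (1 + s^2)" "\<phi> x = 0"
      by blast
    moreover have "\<delta>0 / sqrt (1 + s^2) \<le> \<eta>"
      using divide_sqrt_one_plus_square_le[of \<delta>0 s] \<open>0 < \<delta>0\<close> by (simp add: \<delta>0_def)
    ultimately show "p = (x0, y0)"
      using strict_valley_less[OF valley(1), of x] \<open>\<phi> x0 = 0\<close> by force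
  qed
  moreover have "\<exists>\<epsilon>>0. \<forall>m.
      (0 < \<sigma> * (m - m0) \<and> \<sigma> * (m - m0) < \<epsilon> \<longrightarrow>
        (\<exists>p q. p \<noteq> q \<and> {z \<in> ball (x0, y0) \<delta>. F m z = 0} = {p, q})) \<and>
      (0 < \<sigma> * (m0 - m) \<and> \<sigma> * (m0 - m) < \<epsilon> \<longrightarrow> {z \<in> ball (x0, y0) \<delta>. F m z = 0} = {})"
    if "0 < \<delta> \<and> \<delta> \<le> \<delta>0" for \<delta>
    using fold_zero_count_along_line[OF zero_iff valley(1,3), of \<delta>] that by (simp add: \<delta>0_def)
  moreover have "\<exists>D. (F m0 has_derivative D) (at (x0, y0)) \<and> (\<exists>v. v \<noteq> 0 \<and> D v = 0) \<and> (\<exists>w. D (D w) \<noteq> 0)"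
    using assms(7-10) by blast
  ultimately show ?thesis
    unfolding saddle_node_bifurcation_def using \<open>0 < \<delta>0\<close> \<open>\<sigma> \<in> {-1, 1}\<close> by blast
qed

text \<open>The cubic \<open>u\<close> of the paper: \<open>c (1 + k x)\<close> times the per-capita growth rate of \<open>y\<close>
  on the nullcline \<open>y = (1 - x)/c\<close>.\<close>

definition equilibrium_cubic :: "real \<Rightarrow> real \<Rightarrow> real \<Rightarrow> real \<Rightarrow> real \<Rightarrow> real" where
  "equilibrium_cubic k c a m x =
     k * m * x^3 + ((- a * c - m + 1) * k + m) * x^2 + (- a * c - k - m + 1) * x + c - 1"

lemma equilibrium_cubic_eq_0_iff:
  assumes "c \<noteq> 0" "1 + k * x \<noteq> 0"
  shows "equilibrium_cubic k c a m x = 0 \<longleftrightarrow>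
    1 / (1 + k * x) - (1 - x) / c - a * x - m * x * ((1 - x) / c) = 0"
proof -
  define Z where "Z = (1 - x) + a * c * x + m * x * (1 - x)"
  have "equilibrium_cubic k c a m x = c - (1 + k * x) * Z"
    by (simp add: equilibrium_cubic_def Z_def algebra_simps power2_eq_square power3_eq_cube)
  moreover have "1 / (1 + k * x) - (1 - x) / c - a * x - m * x * ((1 - x) / c) = 1 / (1 + k * x) - Z / c"
    using assms by (simp add: Z_def add_divide_distrib diff_divide_distrib algebra_simps)
  moreover have "\<dots> = (c - (1 + k * x) * Z) / ((1 + k * x) * c)"
    using assms by (simp add: diff_frac_eq mult.commute)
  ultimately show ?thesis using assms by simp
qed

lemma vfield_eq_0_iff:
  assumes "0 < b" "0 < c" "0 \<le> k" "0 < x" "0 < y"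
  shows "vfield b c k a m (x, y) = 0 \<longleftrightarrow> y = (1 - x) / c \<and> equilibrium_cubic k c a m x = 0"
proof -
  have "1 + k * x \<noteq> 0" using assms by (smt (verit) mult_nonneg_nonneg)
  have "vfield b c k a m (x, y) = 0 \<longleftrightarrow> 1 - x - c * y = 0 \<and> 1 / (1 + k * x) - y - a * x - m * x * y = 0"
    using assms by (simp add: vfield_def zero_prod_def)
  also have "1 - x - c * y = 0 \<longleftrightarrow> y = (1 - x) / c"
    using \<open>0 < c\<close> by (auto simp: field_simps)
  finally show ?thesis
    using equilibrium_cubic_eq_0_iff[OF _ \<open>1 + k * x \<noteq> 0\<close>] \<open>0 < c\<close> by auto
qed

lemma vfield_has_derivative_at_equilibrium:
  assumes "1 + k * x \<noteq> 0" "1 - x - c * y = 0" "1 / (1 + k * x) - y - a * x - m * x * y = 0"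
  shows "(vfield b c k a m has_derivative
    (\<lambda>h. (- b * x * (fst h + c * snd h),
          - y * ((k / (1 + k * x)^2 + a + m * y) * fst h + (1 + m * x) * snd h)))) (at (x, y))"
proof -
  have "vfield b c k a m = (\<lambda>p. (b * fst p * (1 - fst p - c * snd p),
      snd p * (1 / (1 + k * fst p) - snd p - a * fst p - m * fst p * snd p)))"
    by (simp add: vfield_def fun_eq_iff)
  moreover have "((\<lambda>p. b * fst p * (1 - fst p - c * snd p)) has_derivative
      (\<lambda>h. - b * x * (fst h + c * snd h))) (at (x, y))"
    using assms(2) by (auto intro!: derivative_eq_intros ext simp: algebra_simps)
      (metis distrib_left mult.assoc mult.commute mult.right_neutral)
  moreover have "((\<lambda>p. snd p * (1 / (1 + k * fst p) - snd p - a * fst p - m * fst p * snd p)) has_derivative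
      (\<lambda>h. - y * ((k / (1 + k * x)^2 + a + m * y) * fst h + (1 + m * x) * snd h))) (at (x, y))"
    by (auto intro!: derivative_eq_intros simp: assms(1,3))
      (simp add: fun_eq_iff algebra_simps power2_eq_square)
  ultimately show ?thesis by (simp add: has_derivative_Pair)
qed

lemma equilibrium_cubic_a_1:
  assumes "0 < E" "0 < k" "c \<noteq> 0"
  shows "equilibrium_cubic k c (a_1 k c E) m x =
    (x - E)^2 * (k * m_SN k c E * x + (c - 1) / E^2) - (m - m_SN k c E) * (x * (1 - x) * (1 + k * x))"
proof -
  define N where "N = E^2 * k^2 + 2 * E * k + 1"
  define A where "A = E^4 * k^2 - 2 * E^3 * k^2 + 2 * E^3 * k + 3 * E^2 * c * k + E^2 * k^2
      - 4 * E^2 * k - 2 * E * c * k + E^2 + 2 * E * c + 2 * E * k - 2 * E - c + 1"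
  define M where "M = - (E^2 * k^2) + 2 * E * c * k - 2 * E * k + c - 1"
  define P where "P = k * m * x^3 + ((1 - m) * k + m) * x^2 + (1 - k - m) * x + c - 1"
  define Q where "Q = x * (1 - x) * (1 + k * x)"
  have "E^2 * N \<noteq> 0"
    using assms unfolding N_def by (smt (verit) mult_pos_pos zero_less_power)
  have "a_1 k c E * c = A / (E^2 * N)"
    using \<open>c \<noteq> 0\<close> unfolding a_1_def A_def N_def by simp
  then have "equilibrium_cubic k c (a_1 k c E) m x = P - A / (E^2 * N) * (k * x^2 + x)"
    unfolding equilibrium_cubic_def P_def by (simp add: algebra_simps add_divide_distrib)
  also have "\<dots> = (E^2 * N * P - A * (k * x^2 + x)) / (E^2 * N)"
    using \<open>E^2 * N \<noteq> 0\<close> by (simp add: field_simps)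
  also have "E^2 * N * P - A * (k * x^2 + x) =
      (x - E)^2 * (k * M * x + (c - 1) * N) - (m * (E^2 * N) - M) * Q"
    unfolding A_def M_def N_def P_def Q_def
    by (simp add: algebra_simps power2_eq_square power3_eq_cube power4_eq_xxxx)
  also have "\<dots> / (E^2 * N) = (x - E)^2 * (k * (M / (E^2 * N)) * x + (c - 1) / E^2) - (m - M / (E^2 * N)) * Q"
    using \<open>E^2 * N \<noteq> 0\<close> by (simp add: field_simps)
  also have "M / (E^2 * N) = m_SN k c E"
    unfolding m_SN_def M_def N_def by simp
  finally show ?thesis unfolding Q_def .
qed

lemma m_SN_cofactor_nonzero:
  assumes "0 < E" "0 < k"
    and "c \<noteq> (E^3 * k^3 + 3 * E^2 * k^2 + 3 * E * k + 1) / (3 * E^2 * k^2 + 3 * E * k + 1)"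
  shows "k * m_SN k c E * E + (c - 1) / E^2 \<noteq> 0"
proof -
  define N where "N = E^2 * k^2 + 2 * E * k + 1"
  define M where "M = - (E^2 * k^2) + 2 * E * c * k - 2 * E * k + c - 1"
  have "E^2 * N \<noteq> 0" "0 < 3 * E^2 * k^2 + 3 * E * k + 1"
    using assms unfolding N_def by (smt (verit) mult_pos_pos zero_less_power)+
  have "m_SN k c E = M / (E^2 * N)"
    unfolding m_SN_def M_def N_def by simp
  then have "k * m_SN k c E * E + (c - 1) / E^2 = (k * M * E + (c - 1) * N) / (E^2 * N)"
    using \<open>E^2 * N \<noteq> 0\<close> \<open>0 < E\<close> by (simp add: field_simps power2_eq_square)
  also have "k * M * E + (c - 1) * N =
      c * (3 * E^2 * k^2 + 3 * E * k + 1) - (E^3 * k^3 + 3 * E^2 * k^2 + 3 * E * k + 1)"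
    unfolding M_def N_def by (simp add: algebra_simps power2_eq_square power3_eq_cube)
  moreover have "c * (3 * E^2 * k^2 + 3 * E * k + 1) \<noteq> E^3 * k^3 + 3 * E^2 * k^2 + 3 * E * k + 1"
    using assms(3) \<open>0 < 3 * E^2 * k^2 + 3 * E * k + 1\<close> by (auto simp: field_simps)
  ultimately show ?thesis using \<open>E^2 * N \<noteq> 0\<close> by simp
qed

text \<open>This makes the second row of the Jacobian at the fold proportional to \<open>(1, c)\<close>, like the
  first one: the two nullclines are tangent there.\<close>

lemma a_1_m_SN_tangency:
  assumes "0 < E" "0 < k" "c \<noteq> 0"
  shows "k / (1 + k * E)^2 + a_1 k c E + m_SN k c E * ((1 - E) / c) = (1 + m_SN k c E * E) / c"
proof -
  define N where "N = E^2 * k^2 + 2 * E * k + 1"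
  define A where "A = E^4 * k^2 - 2 * E^3 * k^2 + 2 * E^3 * k + 3 * E^2 * c * k + E^2 * k^2
      - 4 * E^2 * k - 2 * E * c * k + E^2 + 2 * E * c + 2 * E * k - 2 * E - c + 1"
  define M where "M = - (E^2 * k^2) + 2 * E * c * k - 2 * E * k + c - 1"
  have "N \<noteq> 0"
    using assms unfolding N_def by (smt (verit) mult_pos_pos zero_less_power)
  have N: "(1 + k * E)^2 = N" by (simp add: N_def power2_eq_square algebra_simps)
  have a: "a_1 k c E = A / (c * E^2 * N)" and m: "m_SN k c E = M / (E^2 * N)"
    unfolding a_1_def m_SN_def A_def M_def N_def by simp_all
  have "k / (1 + k * E)^2 + a_1 k c E + m_SN k c E * ((1 - E) / c) =
      (c * k * E^2 + A + M * (1 - E)) / (c * E^2 * N)"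
    unfolding N a m using \<open>N \<noteq> 0\<close> assms by (simp add: field_simps)
  also have "c * k * E^2 + A + M * (1 - E) = E^2 * N + M * E"
    unfolding A_def M_def N_def by (simp add: algebra_simps power2_eq_square power3_eq_cube power4_eq_xxxx)
  also have "(E^2 * N + M * E) / (c * E^2 * N) = (1 + m_SN k c E * E) / c"
    unfolding m using \<open>N \<noteq> 0\<close> assms by (simp add: field_simps)
  finally show ?thesis .
qed

lemma vfield_a_1_linearization:
  assumes "0 < E" "0 < k" "c \<noteq> 0"
  shows "(vfield b c k (a_1 k c E) (m_SN k c E) has_derivative
    (\<lambda>h. (fst h + c * snd h) *\<^sub>R (- b * E, - (1 - E) * (1 + m_SN k c E * E) / c^2)))
    (at (E, (1 - E) / c))"
proof -
  define m0 where "m0 = m_SN k c E"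
  define y0 where "y0 = (1 - E) / c"
  have "1 + k * E \<noteq> 0" using assms by (smt (verit) mult_pos_pos)
  have "1 - E - c * y0 = 0" using \<open>c \<noteq> 0\<close> by (simp add: y0_def)
  moreover have "equilibrium_cubic k c (a_1 k c E) m0 E = 0"
    using equilibrium_cubic_a_1[OF assms] by (simp add: m0_def)
  then have "1 / (1 + k * E) - y0 - a_1 k c E * E - m0 * E * y0 = 0"
    using equilibrium_cubic_eq_0_iff[OF \<open>c \<noteq> 0\<close> \<open>1 + k * E \<noteq> 0\<close>] by (simp add: y0_def)
  ultimately have "(vfield b c k (a_1 k c E) m0 has_derivative
      (\<lambda>h. (- b * E * (fst h + c * snd h),
            - y0 * ((k / (1 + k * E)^2 + a_1 k c E + m0 * y0) * fst h + (1 + m0 * E) * snd h))))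
      (at (E, y0))"
    by (rule vfield_has_derivative_at_equilibrium[OF \<open>1 + k * E \<noteq> 0\<close>])
  moreover have "k / (1 + k * E)^2 + a_1 k c E + m0 * y0 = (1 + m0 * E) / c"
    using a_1_m_SN_tangency[OF assms] by (simp add: m0_def y0_def)
  moreover have "(\<lambda>h. (- b * E * (fst h + c * snd h),
            - y0 * ((1 + m0 * E) / c * fst h + (1 + m0 * E) * snd h))) =
      (\<lambda>h. (fst h + c * snd h) *\<^sub>R (- b * E, - (1 - E) * (1 + m0 * E) / c^2))"
    using \<open>c \<noteq> 0\<close> by (simp add: fun_eq_iff y0_def field_simps power2_eq_square)
  ultimately show ?thesis by (simp add: m0_def y0_def)
qed

lemma vfield_a_1_fold_linearization:
  assumes "0 < b" "0 < k" "0 < c" "0 < E" "E < 1" "0 < m_SN k c E"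
  obtains D where "(vfield b c k (a_1 k c E) (m_SN k c E) has_derivative D) (at (E, (1 - E) / c))"
    and "D (c, -1) = 0" and "D (D (1, 0)) \<noteq> 0"
proof -
  define u where "u = (- b * E, - (1 - E) * (1 + m_SN k c E * E) / c^2)"
  define D where "D h = (fst h + c * snd h) *\<^sub>R u" for h :: "real \<times> real"
  have "(vfield b c k (a_1 k c E) (m_SN k c E) has_derivative D) (at (E, (1 - E) / c))"
    using vfield_a_1_linearization[of E k c b] assms by (simp add: u_def D_def [abs_def])
  moreover have "D (c, -1) = 0" by (simp add: D_def)
  moreover have "fst u + c * snd u = - b * E - (1 - E) * (1 + m_SN k c E * E) / c"
    using assms by (simp add: u_def power2_eq_square field_simps)
  moreover have "0 < (1 - E) * (1 + m_SN k c E * E) / c"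
    using assms by (simp add: add_pos_pos)
  ultimately have "fst u + c * snd u < 0"
    using mult_pos_pos[OF \<open>0 < b\<close> \<open>0 < E\<close>] by linarith
  moreover have "u \<noteq> 0" using assms by (simp add: u_def zero_prod_def)
  ultimately have "D (D (1, 0)) \<noteq> 0" by (simp add: D_def)
  with \<open>(_ has_derivative D) _\<close> \<open>D (c, -1) = 0\<close> show thesis by (rule that)
qed

definition fold_profile :: "real \<Rightarrow> real \<Rightarrow> real \<Rightarrow> real \<Rightarrow> real" where
  "fold_profile k c E x =
     (x - E)^2 * ((k * m_SN k c E * x + (c - 1) / E^2) / (x * (1 - x) * (1 + k * x)))"

lemma vfield_a_1_eq_0_iff:
  assumes "0 < b" "0 < k" "0 < c" "0 < E" "0 < x" "x < 1" "0 < y"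
  shows "vfield b c k (a_1 k c E) m (x, y) = 0 \<longleftrightarrow>
    y = (1 - E) / c + (- 1 / c) * (x - E) \<and> fold_profile k c E x = m - m_SN k c E"
proof -
  define L where "L = k * m_SN k c E * x + (c - 1) / E^2"
  define Q where "Q = x * (1 - x) * (1 + k * x)"
  have "0 < Q" using assms by (simp add: Q_def add_pos_pos)
  have "vfield b c k (a_1 k c E) m (x, y) = 0 \<longleftrightarrow>
      y = (1 - x) / c \<and> (x - E)^2 * L - (m - m_SN k c E) * Q = 0"
    using vfield_eq_0_iff[of b c k x y] equilibrium_cubic_a_1[of E k c m x] assms
    by (simp add: L_def Q_def)
  also have "(x - E)^2 * L - (m - m_SN k c E) * Q = 0 \<longleftrightarrow> fold_profile k c E x = m - m_SN k c E"
    using \<open>0 < Q\<close> by (auto simp: fold_profile_def L_def Q_def field_simps)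
  also have "y = (1 - x) / c \<longleftrightarrow> y = (1 - E) / c + (- 1 / c) * (x - E)"
    using \<open>0 < c\<close> by (auto simp: field_simps)
  finally show ?thesis .
qed

lemma strict_valley_fold_profile:
  fixes k c E :: real
  assumes "0 < E" "E < 1" "0 \<le> k"
  defines "\<sigma> \<equiv> sgn (k * m_SN k c E * E + (c - 1) / E^2)"
  assumes "\<sigma> \<noteq> 0"
  shows "\<exists>\<eta>>0. strict_valley (\<lambda>x. \<sigma> * fold_profile k c E x) E \<eta>"
proof -
  define L where "L x = k * m_SN k c E * x + (c - 1) / E^2" for x
  define Q where "Q x = x * (1 - x) * (1 + k * x)" for x
  define Q' where "Q' x = (1 - 2 * x) * (1 + k * x) + k * x * (1 - x)" for x
  have Q_pos: "0 < Q x" if "0 < x" "x < 1" for x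
    using that \<open>0 \<le> k\<close> by (simp add: Q_def add_pos_nonneg)
  have "\<exists>\<eta>>0. strict_valley (\<lambda>x. (x - E)^2 * (\<sigma> * L x / Q x)) E \<eta>"
  proof (rule strict_valley_square_factor)
    show "0 < min E (1 - E)" using assms by simp
    have "\<sigma> * L E = \<bar>L E\<bar>"
      unfolding \<sigma>_def L_def by (metis abs_sgn mult.commute)
    then show "0 < \<sigma> * L E / Q E"
      using assms Q_pos[of E] by (simp add: \<sigma>_def L_def sgn_0_0)
    show "((\<lambda>x. \<sigma> * L x / Q x) has_real_derivative \<sigma> * (k * m_SN k c E * Q x - L x * Q' x) / (Q x)^2) (at x)"
      if "\<bar>x - E\<bar> < min E (1 - E)" for x
    proof -
      have "Q x \<noteq> 0" using that Q_pos[of x] by (auto simp: abs_less_iff)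
      then show ?thesis
        unfolding L_def Q_def Q'_def
        by (auto intro!: derivative_eq_intros simp: Q_def field_simps power2_eq_square)
    qed
    show "isCont (\<lambda>x. \<sigma> * (k * m_SN k c E * Q x - L x * Q' x) / (Q x)^2) E"
      using Q_pos[of E] assms unfolding L_def Q_def Q'_def by (auto intro!: continuous_intros)
  qed
  moreover have "(\<lambda>x. (x - E)^2 * (\<sigma> * L x / Q x)) = (\<lambda>x. \<sigma> * fold_profile k c E x)"
    by (simp add: fun_eq_iff fold_profile_def L_def Q_def)
  ultimately show ?thesis by simp
qed

theorem theorem10:
  fixes b k c Ee :: real
  assumes "b > 0" and "k > 0" and "c > 1" and "0 < Ee" and "Ee < 1"
    and "a_1 k c Ee > 0" and "m_SN k c Ee > 0"
    and "m_SN k c Ee > 1 - a_1 k c Ee * c - k"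
    and "k < 1 / a_1 k c Ee - 1"
    and "c \<noteq> (Ee^3 * k^3 + 3 * Ee^2 * k^2 + 3 * Ee * k + 1) / (3 * Ee^2 * k^2 + 3 * Ee * k + 1)"
  shows "saddle_node_bifurcation (\<lambda>m. vfield b c k (a_1 k c Ee) m) (m_SN k c Ee) (Ee, (1 - Ee) / c)"
proof -
  define m0 where "m0 = m_SN k c Ee"
  define y0 where "y0 = (1 - Ee) / c"
  define \<sigma> where "\<sigma> = sgn (k * m0 * Ee + (c - 1) / Ee^2)"
  define \<phi> where "\<phi> x = \<sigma> * fold_profile k c Ee x" for x
  have "\<sigma> \<in> {-1, 1}"
    using m_SN_cofactor_nonzero[of Ee k c] assms by (simp add: \<sigma>_def m0_def sgn_if)
  then obtain \<eta> where "0 < \<eta>" "strict_valley \<phi> Ee \<eta>"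
    using strict_valley_fold_profile[of Ee k c] assms unfolding \<phi>_def \<sigma>_def m0_def by auto
  obtain D where "(vfield b c k (a_1 k c Ee) m0 has_derivative D) (at (Ee, y0))"
    and "D (c, -1) = 0" "D (D (1, 0)) \<noteq> 0"
    using vfield_a_1_fold_linearization[of b k c Ee] assms unfolding m0_def y0_def by auto
  define r where "r = min (min Ee (1 - Ee)) y0"
  have "0 < r" using assms by (simp add: r_def y0_def)
  have zero_iff: "vfield b c k (a_1 k c Ee) m (x, y) = 0 \<longleftrightarrow> y = y0 + (- 1 / c) * (x - Ee) \<and> \<phi> x = \<sigma> * (m - m0)"
    if "(x, y) \<in> ball (Ee, y0) r" for m x y
  proof -
    have "\<bar>x - Ee\<bar> < r" "\<bar>y - y0\<bar> < r"
      using that dist_fst_le[of "(Ee, y0)" "(x, y)"] dist_snd_le[of "(Ee, y0)" "(x, y)"]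
      by (auto simp: dist_real_def abs_minus_commute)
    then have "0 < x" "x < 1" "0 < y" by (auto simp: r_def abs_less_iff)
    then show ?thesis
      using vfield_a_1_eq_0_iff[of b k c Ee x y m] assms \<open>\<sigma> \<in> {-1, 1}\<close>
      by (auto simp: \<phi>_def y0_def m0_def)
  qed
  have "(c, -1) \<noteq> (0 :: real \<times> real)" "\<phi> Ee = 0" by (simp_all add: zero_prod_def \<phi>_def fold_profile_def)
  then show ?thesis
    unfolding m0_def[symmetric] y0_def[symmetric]
    by (intro saddle_node_bifurcation_along_line[OF \<open>0 < r\<close> zero_iff \<open>\<sigma> \<in> {-1, 1}\<close>
        \<open>strict_valley \<phi> Ee \<eta>\<close> \<open>0 < \<eta>\<close> _ \<open>(_ has_derivative D) _\<close> _ \<open>D (c, -1) = 0\<close>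
        \<open>D (D (1, 0)) \<noteq> 0\<close>])
qed

end
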